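(* Let $G$ be a graph such that $|F_e|\le 3$ for every edge $e$ of $G$, and let $u,v,w$ be an induced path on three vertices in $G$, with the sets $B_i$ and $N^{+}(x)$ defined from $u,v,w$ as in the context. Then $|N^{+}(x)|\le 2$ for every $x\in\bigcup_{i\ge 0}B_i$.
   Context: All graphs are finite, simple and undirected. For an edge $e$ of $G$, $F_e$ denotes the set of all edges $e'$ of $G$ such that $V(e)\cup V(e')$ induces a path on three vertices in $G$ (i.e., $e$ and $e'$ share exactly one endpoint and their other endpoints are non-adjacent). Let $u,v,w$ be an induced path on three vertices ($uv,vw\in E(G)$, $uw\notin E(G)$), and let $A=\{u,v,w\}$. Let $B$ be the set of vertices not in $A$ having exactly one or two neighbors in $A$; let $C$ be the set of vertices adjacent to all three vertices of $A$; let $D$ be the set of vertices not in $A\cup B\cup C$ having at least one neighbor in $C$. For $i\ge1$, $B_i$ is the set of vertices $x\notin A\cup B\cup C\cup D$ whose distance in $G$ to the set $B$ is exactly $i$; also $B_0=B$ and $B_{-1}=A$. For $i\ge 0$ and $x\in B_i$, $N^{+}(x)$, $N^{=}(x)$, $N^{-}(x)$ denote the sets of neighbors of $x$ in $B_{i+1}$, $B_i$, $B_{i-1}$ respectively. *)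

theory Defs
  imports Main
begin

definition simple_graph :: "'a set \<Rightarrow> ('a \<Rightarrow> 'a \<Rightarrow> bool) \<Rightarrow> bool" where
  "simple_graph V E \<longleftrightarrow> finite V \<and> (\<forall>x y. E x y \<longrightarrow> x \<in> V \<and> y \<in> V)
     \<and> (\<forall>x y. E x y \<longrightarrow> E y x) \<and> (\<forall>x. \<not> E x x)"

definition edges :: "'a set \<Rightarrow> ('a \<Rightarrow> 'a \<Rightarrow> bool) \<Rightarrow> 'a set set" where
  "edges V E = {{a, b} | a b. a \<in> V \<and> b \<in> V \<and> E a b}"

text \<open>F_e: edges e' sharing exactly one endpoint with e whose other endpoints
 are non-adjacent (so V(e) \<union> V(e') induces P3).\<close>
definition F_set :: "'a set \<Rightarrow> ('a \<Rightarrow> 'a \<Rightarrow> bool) \<Rightarrow> 'a set \<Rightarrow> 'a set set" where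
  "F_set V E e = {e' \<in> edges V E. card (e \<inter> e') = 1 \<and>
      (\<forall>a b. a \<in> e - e' \<longrightarrow> b \<in> e' - e \<longrightarrow> \<not> E a b)}"

text \<open>reach E k x S: there is a walk of length at most k from x to a vertex of S,
 i.e. dist(x,S) \<le> k.\<close>
fun reach :: "('a \<Rightarrow> 'a \<Rightarrow> bool) \<Rightarrow> nat \<Rightarrow> 'a \<Rightarrow> 'a set \<Rightarrow> bool" where
  "reach E 0 x S = (x \<in> S)"
| "reach E (Suc k) x S = (reach E k x S \<or> (\<exists>y. E x y \<and> reach E k y S))"

definition setA :: "'a \<Rightarrow> 'a \<Rightarrow> 'a \<Rightarrow> 'a set" where
  "setA u v w = {u, v, w}"

definition setB :: "'a set \<Rightarrow> ('a \<Rightarrow> 'a \<Rightarrow> bool) \<Rightarrow> 'a \<Rightarrow> 'a \<Rightarrow> 'a \<Rightarrow> 'a set" where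
  "setB V E u v w = {x \<in> V - setA u v w.
      card {a \<in> setA u v w. E x a} = 1 \<or> card {a \<in> setA u v w. E x a} = 2}"

definition setC :: "'a set \<Rightarrow> ('a \<Rightarrow> 'a \<Rightarrow> bool) \<Rightarrow> 'a \<Rightarrow> 'a \<Rightarrow> 'a \<Rightarrow> 'a set" where
  "setC V E u v w = {x \<in> V - setA u v w. E x u \<and> E x v \<and> E x w}"

definition setD :: "'a set \<Rightarrow> ('a \<Rightarrow> 'a \<Rightarrow> bool) \<Rightarrow> 'a \<Rightarrow> 'a \<Rightarrow> 'a \<Rightarrow> 'a set" where
  "setD V E u v w = {x \<in> V - (setA u v w \<union> setB V E u v w \<union> setC V E u v w).
      \<exists>c \<in> setC V E u v w. E x c}"

definition Bset :: "'a set \<Rightarrow> ('a \<Rightarrow> 'a \<Rightarrow> bool) \<Rightarrow> 'a \<Rightarrow> 'a \<Rightarrow> 'a \<Rightarrow> nat \<Rightarrow> 'a set" where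
  "Bset V E u v w i = (if i = 0 then setB V E u v w else
     {x \<in> V - (setA u v w \<union> setB V E u v w \<union> setC V E u v w \<union> setD V E u v w).
        reach E i x (setB V E u v w) \<and> \<not> reach E (i - 1) x (setB V E u v w)})"

definition Nplus :: "'a set \<Rightarrow> ('a \<Rightarrow> 'a \<Rightarrow> bool) \<Rightarrow> 'a \<Rightarrow> 'a \<Rightarrow> 'a \<Rightarrow> nat \<Rightarrow> 'a \<Rightarrow> 'a set" where
  "Nplus V E u v w i x = {y \<in> Bset V E u v w (Suc i). E x y}"

end

theory Submission
  imports Defs
begin

text \<open>Let \<open>x \<in> B\<^sub>i\<close>. There is an edge \<open>xz\<close> and a vertex \<open>t\<close> with \<open>zt \<in> F\<^bsub>xz\<^esub>\<close> such that \<open>z\<close> is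
  neither in nor adjacent to \<open>B\<^sub>i\<^sub>+\<^sub>1\<close>: for \<open>i = 0\<close> take \<open>z, t \<in> A\<close>, and for \<open>i > 0\<close> take \<open>z\<close> one step
  closer to \<open>B\<close> and \<open>t\<close> one step closer again (or in \<open>A\<close> if \<open>z \<in> B\<close>). Then every
  \<open>y \<in> N\<^sup>+(x)\<close> yields a further edge \<open>xy \<in> F\<^bsub>xz\<^esub>\<close>, so \<open>|N\<^sup>+(x)| + 1 \<le> |F\<^bsub>xz\<^esub>| \<le> 3\<close>.\<close>

lemma reach_mono: "reach E k x S \<Longrightarrow> k \<le> m \<Longrightarrow> reach E m x S"
  by (induction m arbitrary: x) (auto simp: le_Suc_eq)

lemma reach_outside_step:
  "reach E k z S \<Longrightarrow> z \<notin> S \<Longrightarrow> \<exists>t. E z t \<and> reach E (k - 1) t S"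
proof (induction k arbitrary: z)
  case (Suc k)
  show ?case
  proof (cases "reach E k z S")
    case True
    then obtain t where "E z t" "reach E (k - 1) t S" using Suc by blast
    then show ?thesis using reach_mono[of E "k - 1" t S k] by auto
  qed (use Suc.prems in auto)
qed simp

lemma finite_edges: "simple_graph V E \<Longrightarrow> finite (edges V E)"
  unfolding simple_graph_def edges_def
  by (rule finite_subset[of _ "Pow V"]) auto

lemma F_set_shared_endpoint:
  assumes "{c, q} \<in> edges V E" "p \<noteq> c" "q \<noteq> c" "p \<noteq> q" "\<not> E p q"
  shows "{c, q} \<in> F_set V E {c, p}"
proof -
  have "{c, p} \<inter> {c, q} = {c}" "{c, p} - {c, q} = {p}" "{c, q} - {c, p} = {q}"
    using assms(2-4) by auto
  then show ?thesis
    using assms(1,5) unfolding F_set_def by (simp only: mem_Collect_eq) simp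
qed

lemma card_F_set_ge:
  assumes G: "simple_graph V E"
    and xz: "E x z" and zt: "E z t" and "\<not> E x t" "x \<noteq> t"
    and Y: "Y \<subseteq> {y. E x y \<and> \<not> E z y \<and> y \<noteq> z}"
  shows "card Y + 1 \<le> card (F_set V E {x, z})"
proof -
  have irrefl: "\<And>a. \<not> E a a" and inV: "\<And>a b. E a b \<Longrightarrow> a \<in> V \<and> b \<in> V"
    and "finite V"
    using G unfolding simple_graph_def by blast+
  have "x \<noteq> z" "z \<noteq> t" using xz zt irrefl by metis+
  have "finite Y" using Y inV \<open>finite V\<close> by (blast intro: finite_subset)
  have edge: "{a, b} \<in> edges V E" if "E a b" for a b
    using that inV unfolding edges_def by blast
  have "{x, y} \<in> F_set V E {x, z}" if "y \<in> Y" for y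
    using that Y irrefl edge by (intro F_set_shared_endpoint) blast+
  moreover have "{z, t} \<in> F_set V E {x, z}"
    using F_set_shared_endpoint[of z t V E x] edge[OF zt] \<open>x \<noteq> z\<close> \<open>z \<noteq> t\<close> \<open>x \<noteq> t\<close> \<open>\<not> E x t\<close>
    by (simp add: insert_commute)
  moreover have "inj_on (\<lambda>y. {x, y}) Y" by (auto intro: inj_onI simp: doubleton_eq_iff)
  moreover have "{z, t} \<notin> (\<lambda>y. {x, y}) ` Y" using \<open>x \<noteq> z\<close> \<open>x \<noteq> t\<close> by auto
  ultimately have "card (insert {z, t} ((\<lambda>y. {x, y}) ` Y)) = card Y + 1"
    and "insert {z, t} ((\<lambda>y. {x, y}) ` Y) \<subseteq> F_set V E {x, z}"
    using \<open>finite Y\<close> by (simp_all add: card_image image_subset_iff)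
  moreover have "finite (F_set V E {x, z})"
    using finite_edges[OF G] unfolding F_set_def by simp
  ultimately show ?thesis by (metis card_mono)
qed

locale induced_P3 =
  fixes V :: "'a set" and E :: "'a \<Rightarrow> 'a \<Rightarrow> bool" and u v w :: 'a
  assumes graph: "simple_graph V E"
    and uv: "E u v" and vw: "E v w" and not_uw: "\<not> E u w" and u_ne_w: "u \<noteq> w"
begin

abbreviation "A \<equiv> setA u v w"
abbreviation "B \<equiv> setB V E u v w"
abbreviation "C \<equiv> setC V E u v w"

lemma sym: "E a b \<Longrightarrow> E b a"
  and irrefl: "\<not> E a a"
  using graph unfolding simple_graph_def by blast+

lemma adjacent_A_imp_B_or_C:
  assumes "y \<in> V - A" "a \<in> A" "E y a"
  shows "y \<in> B \<or> y \<in> C"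
proof (rule ccontr)
  let ?N = "{b \<in> A. E y b}"
  assume "\<not> (y \<in> B \<or> y \<in> C)"
  then have "card ?N \<noteq> 1" "card ?N \<noteq> 2" "\<not> (E y u \<and> E y v \<and> E y w)"
    using assms(1) unfolding setB_def setC_def by auto
  moreover have "card ?N \<noteq> 0" "card ?N \<le> card A"
    using assms unfolding setA_def by (auto intro: card_mono)
  moreover have "card A \<le> 3" unfolding setA_def by (simp add: card_insert_le_m1)
  ultimately have "card ?N = card A" by linarith
  then have "?N = A" using card_subset_eq[of A ?N] unfolding setA_def by blast
  then show False using \<open>\<not> (E y u \<and> E y v \<and> E y w)\<close> unfolding setA_def by auto
qed

lemma Bset_Suc_D:
  "y \<in> Bset V E u v w (Suc i) \<Longrightarrow> y \<in> V - A \<and> y \<notin> B \<and> y \<notin> C \<and> \<not> reach E i y B"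
  unfolding Bset_def by auto

lemma Bset_Suc_not_adjacent_A:
  assumes "y \<in> Bset V E u v w (Suc i)" "a \<in> A"
  shows "\<not> E a y \<and> a \<noteq> y"
  using Bset_Suc_D[OF assms(1)] adjacent_A_imp_B_or_C[of y a] assms(2) sym by blast

lemma Bset_Suc_not_adjacent_reach:
  assumes "y \<in> Bset V E u v w (Suc (Suc k))" "reach E k z B"
  shows "\<not> E z y \<and> z \<noteq> y"
  using Bset_Suc_D[OF assms(1)] assms(2) sym reach_mono[of E k z B "Suc k"] by auto

lemma setB_adjacent_A: "x \<in> B \<Longrightarrow> \<exists>a \<in> A. E x a"
  unfolding setB_def by (metis (mono_tags, lifting) card.empty empty_Collect_eq
      zero_neq_numeral zero_neq_one mem_Collect_eq)

lemma setB_anchor: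
  assumes "x \<in> B"
  obtains z t where "z \<in> A" "E x z" "E z t" "\<not> E x t" "x \<noteq> t"
proof -
  let ?N = "{a \<in> A. E x a}"
  have "x \<notin> A" and N: "card ?N = 1 \<or> card ?N = 2"
    using assms unfolding setB_def by auto
  then have x: "x \<noteq> u" "x \<noteq> v" "x \<noteq> w" and A: "u \<in> A" "v \<in> A" "w \<in> A"
    unfolding setA_def by auto
  have "\<not> (E x u \<and> E x v \<and> E x w)"
  proof
    assume "E x u \<and> E x v \<and> E x w"
    then have "?N = {u, v, w}" unfolding setA_def by auto
    moreover have "u \<noteq> v" "v \<noteq> w" using uv vw irrefl by metis+
    ultimately show False using N u_ne_w by simp
  qed
  moreover have "E x u \<or> E x v \<or> E x w"
    using setB_adjacent_A[OF assms] unfolding setA_def by auto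
  ultimately consider "E x v" "\<not> E x u" | "E x v" "\<not> E x w" | "E x u" "\<not> E x v" | "E x w" "\<not> E x v"
    by blast
  then show ?thesis
  proof cases
    case 1 then show ?thesis using that[of v u] A x uv sym by blast
  next
    case 2 then show ?thesis using that[of v w] A x vw by blast
  next
    case 3 then show ?thesis using that[of u v] A x uv by blast
  next
    case 4 then show ?thesis using that[of w v] A x vw sym by blast
  qed
qed

lemma Bset_Suc_anchor:
  assumes x: "x \<in> Bset V E u v w (Suc k)"
  obtains z t where "reach E k z B" "E x z" "E z t" "\<not> E x t" "x \<noteq> t"
proof -
  have x_out: "x \<in> V - A" "x \<notin> B" "x \<notin> C" "\<not> reach E k x B"
    using Bset_Suc_D[OF x] by auto
  moreover have "reach E (Suc k) x B" using x unfolding Bset_def by auto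
  ultimately obtain z where z: "E x z" "reach E k z B" by auto
  show ?thesis
  proof (cases "z \<in> B")
    case True
    then obtain a where "a \<in> A" "E z a" using setB_adjacent_A by blast
    moreover have "\<not> E x a" "x \<noteq> a"
      using adjacent_A_imp_B_or_C[of x a] x_out \<open>a \<in> A\<close> by auto
    ultimately show ?thesis using that z by blast
  next
    case False
    then obtain t where t: "E z t" "reach E (k - 1) t B"
      using reach_outside_step z(2) by metis
    obtain j where k: "k = Suc j" using False z by (cases k) auto
    then have "\<not> E x t" "x \<noteq> t"
      using t x_out(4) reach_mono[of E j t B k] by auto
    then show ?thesis using that z t by blast
  qed
qed

lemma Bset_anchor:
  assumes "x \<in> Bset V E u v w i"
  obtains z t where "E x z" "E z t" "\<not> E x t" "x \<noteq> t"
    "\<forall>y \<in> Bset V E u v w (Suc i). \<not> E z y \<and> z \<noteq> y"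
proof (cases i)
  case 0
  then obtain z t where "z \<in> A" "E x z" "E z t" "\<not> E x t" "x \<noteq> t"
    using setB_anchor assms unfolding Bset_def by auto
  then show ?thesis using that Bset_Suc_not_adjacent_A by blast
next
  case (Suc k)
  then obtain z t where "reach E k z B" "E x z" "E z t" "\<not> E x t" "x \<noteq> t"
    using Bset_Suc_anchor assms by blast
  then show ?thesis using that Bset_Suc_not_adjacent_reach Suc by blast
qed

end

theorem lemma5:
  fixes V :: "'a set" and E :: "'a \<Rightarrow> 'a \<Rightarrow> bool" and u v w :: 'a
  assumes "simple_graph V E"
    and "\<forall>e \<in> edges V E. card (F_set V E e) \<le> 3"
    and "u \<in> V" "v \<in> V" "w \<in> V" "E u v" "E v w" "\<not> E u w" "u \<noteq> w"
  shows "\<forall>i x. x \<in> Bset V E u v w i \<longrightarrow> card (Nplus V E u v w i x) \<le> 2"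
proof (intro allI impI)
  fix i x
  assume "x \<in> Bset V E u v w i"
  interpret induced_P3 V E u v w
    using assms by unfold_locales
  obtain z t where "E x z" "E z t" "\<not> E x t" "x \<noteq> t"
    and far: "\<forall>y \<in> Bset V E u v w (Suc i). \<not> E z y \<and> z \<noteq> y"
    using Bset_anchor \<open>x \<in> Bset V E u v w i\<close> by blast
  have "Nplus V E u v w i x \<subseteq> {y. E x y \<and> \<not> E z y \<and> y \<noteq> z}"
    using far unfolding Nplus_def by auto
  then have "card (Nplus V E u v w i x) + 1 \<le> card (F_set V E {x, z})"
    using card_F_set_ge[OF assms(1)] \<open>E x z\<close> \<open>E z t\<close> \<open>\<not> E x t\<close> \<open>x \<noteq> t\<close> by blast
  moreover have "{x, z} \<in> edges V E"
    using assms(1) \<open>E x z\<close> unfolding simple_graph_def edges_def by blast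
  ultimately show "card (Nplus V E u v w i x) \<le> 2" using assms(2) by fastforce
qed

end
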